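(* Let $d\ge 1$, let $L:\mathbb{R}^d\times\mathbb{R}^{d+1}\to\mathbb{R}$ be a loss function such that $L(w,z)$ is convex in $w$ for every $z$, and let $\nabla_1 L(w,z)$ denote a (fixed choice of) sub-gradient of $L(\cdot,z)$ at $w$. Assume there are constants $A,B\ge 0$ such that $\|\nabla_1 L(w,z)\|^2\le A\,L(w,z)+B$ for all $w\in\mathbb{R}^d$ and $z\in\mathbb{R}^{d+1}$. Let $\eta>0$ with $1-0.5A\eta\neq 0$, let $\theta\in[0,\infty]$, let $g_1,g_2,\ldots\ge 0$ be gravity parameters, and let $z_1,z_2,\ldots\in\mathbb{R}^{d+1}$ be an arbitrary sequence. Define $w_1=0$ and, for $i\ge 1$, \[ w_{i+1}=T_1\big(w_i-\eta\nabla_1 L(w_i,z_i),\ \eta g_i,\ \theta\big). \] Then for every $T\ge 1$ and every $\bar w\in\mathbb{R}^d$, \[ \frac{1-0.5A\eta}{T}\sum_{i=1}^T\left[L(w_i,z_i)+\frac{g_i}{1-0.5A\eta}\,\|w_{i+1}\cdot I(|w_{i+1}|\le\theta)\|_1\right] \le \frac{\eta}{2}B+\frac{\|\bar w\|^2}{2\eta T}+\frac1T\sum_{i=1}^T\Big[L(\bar w,z_i)+g_i\,\|\bar w\cdot I(|w_{i+1}|\le\theta)\|_1\Big]. \]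
   Context: $\|\cdot\|$ is the Euclidean norm and $\|\cdot\|_1$ the $1$-norm. For $v=(v_1,\dots,v_d)\in\mathbb{R}^d$, $\alpha\ge 0$ and $\theta\in[0,\infty]$, the truncation operator is $T_1(v,\alpha,\theta)=(T_1(v_1,\alpha,\theta),\dots,T_1(v_d,\alpha,\theta))$ with $T_1(v_j,\alpha,\theta)=\max(0,v_j-\alpha)$ if $v_j\in[0,\theta]$, $=\min(0,v_j+\alpha)$ if $v_j\in[-\theta,0]$, and $=v_j$ otherwise. For vectors $v,v'\in\mathbb{R}^d$, $\|v\cdot I(|v'|\le\theta)\|_1:=\sum_{j=1}^d |v_j|\,I(|v'_j|\le\theta)$, where $I(\cdot)$ is the indicator function. *)

theory Defs
  imports "HOL-Analysis.Analysis"
begin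

definition trunc1 :: "real \<Rightarrow> real \<Rightarrow> ereal \<Rightarrow> real" where
  "trunc1 v \<alpha> \<theta> =
     (if 0 \<le> v \<and> ereal v \<le> \<theta> then max 0 (v - \<alpha>)
      else if v \<le> 0 \<and> ereal (- v) \<le> \<theta> then min 0 (v + \<alpha>)
      else v)"

definition Trunc1 :: "real ^ 'n \<Rightarrow> real \<Rightarrow> ereal \<Rightarrow> real ^ 'n" where
  "Trunc1 v \<alpha> \<theta> = (\<chi> j. trunc1 (v $ j) \<alpha> \<theta>)"

definition masked_norm1 :: "real ^ 'n \<Rightarrow> real ^ 'n \<Rightarrow> ereal \<Rightarrow> real" where
  "masked_norm1 v v' \<theta> = (\<Sum>j\<in>UNIV. \<bar>v $ j\<bar> * (if ereal \<bar>v' $ j\<bar> \<le> \<theta> then 1 else 0))"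

definition is_subgradient :: "(real ^ 'n \<Rightarrow> real) \<Rightarrow> real ^ 'n \<Rightarrow> real ^ 'n \<Rightarrow> bool" where
  "is_subgradient f w g \<longleftrightarrow> (\<forall>v. f v \<ge> f w + g \<bullet> (v - w))"

end

theory Submission
  imports Defs
begin

text \<open>On the coordinates it actually truncates, each update is the proximal step of the
  penalty \<open>\<eta> g\<^sub>i \<parallel>\<cdot>\<parallel>\<^sub>1\<close> after a subgradient step \<open>v = w\<^sub>i - \<eta> \<nabla>L\<close>, so
  \<open>\<parallel>w\<^sub>i\<^sub>+\<^sub>1 - w\<parallel>\<^sup>2 + 2\<eta> g\<^sub>i \<parallel>w\<^sub>i\<^sub>+\<^sub>1\<parallel>\<^sub>1 \<le> \<parallel>v - w\<parallel>\<^sup>2 + 2\<eta> g\<^sub>i \<parallel>w\<parallel>\<^sub>1\<close> with both l1-norms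
  masked by the truncated coordinates. Together with the subgradient inequality and the growth
  bound \<open>\<parallel>\<nabla>L\<parallel>\<^sup>2 \<le> A L + B\<close> this gives a one-step decrease of \<open>\<parallel>w\<^sub>i - w\<parallel>\<^sup>2\<close>, and
  summing over \<open>i\<close> telescopes.\<close>

lemma soft_threshold_prox_le:
  fixes v a b :: real
  assumes "0 \<le> v" "0 \<le> a"
  shows "(max 0 (v - a) - b)\<^sup>2 + 2 * a * \<bar>max 0 (v - a)\<bar> \<le> (v - b)\<^sup>2 + 2 * a * \<bar>b\<bar>"
proof (cases "a \<le> v")
  case True
  have "(max 0 (v - a) - b)\<^sup>2 + 2 * a * \<bar>max 0 (v - a)\<bar> = (v - b)\<^sup>2 + 2 * a * b - a\<^sup>2"
    using True by (simp add: power2_eq_square algebra_simps)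
  also have "\<dots> \<le> (v - b)\<^sup>2 + 2 * a * \<bar>b\<bar>"
    using assms(2) zero_le_power2[of a] mult_left_mono[OF abs_ge_self, of "2 * a" b] by linarith
  finally show ?thesis .
next
  case False
  have "v * b \<le> a * \<bar>b\<bar>"
    using assms False by (smt (verit) abs_ge_self abs_ge_zero mult_left_mono mult_right_mono)
  then have "(max 0 (v - a) - b)\<^sup>2 + 2 * a * \<bar>max 0 (v - a)\<bar> \<le> (v - b)\<^sup>2 - v\<^sup>2 + 2 * a * \<bar>b\<bar>"
    using False by (simp add: power2_eq_square algebra_simps)
  then show ?thesis
    using zero_le_power2[of v] by linarith
qed

lemma trunc1_prox_le:
  fixes v a b :: real and \<theta> :: ereal
  assumes "0 \<le> a"
  defines "m \<equiv> (if ereal \<bar>trunc1 v a \<theta>\<bar> \<le> \<theta> then 1 else 0)"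
  shows "(trunc1 v a \<theta> - b)\<^sup>2 + 2 * a * (\<bar>trunc1 v a \<theta>\<bar> * m) \<le> (v - b)\<^sup>2 + 2 * a * (\<bar>b\<bar> * m)"
proof -
  consider (pos) "0 \<le> v" "ereal v \<le> \<theta>" | (neg) "v \<le> 0" "ereal (- v) \<le> \<theta>"
    | (outside) "\<not> ereal \<bar>v\<bar> \<le> \<theta>"
    by (cases "0 \<le> v") auto
  then show ?thesis
  proof cases
    case pos
    then have "trunc1 v a \<theta> = max 0 (v - a)"
      by (simp add: trunc1_def)
    moreover have "ereal \<bar>max 0 (v - a)\<bar> \<le> \<theta>"
    proof -
      have "\<bar>max 0 (v - a)\<bar> \<le> v"
        using pos assms(1) by simp
      then show ?thesis
        using pos(2) by (meson ereal_less_eq(3) order_trans)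
    qed
    ultimately show ?thesis
      using soft_threshold_prox_le[OF pos(1) assms(1)] by (simp add: m_def)
  next
    case neg
    then have "trunc1 v a \<theta> = - max 0 (- v - a)"
      using assms(1) by (auto simp: trunc1_def)
    moreover have "ereal \<bar>max 0 (- v - a)\<bar> \<le> \<theta>"
    proof -
      have "\<bar>max 0 (- v - a)\<bar> \<le> - v"
        using neg assms(1) by simp
      then show ?thesis
        using neg(2) by (meson ereal_less_eq(3) order_trans)
    qed
    moreover have "(max 0 (- v - a) - - b)\<^sup>2 + 2 * a * \<bar>max 0 (- v - a)\<bar>
        \<le> (- v - - b)\<^sup>2 + 2 * a * \<bar>- b\<bar>"
      using soft_threshold_prox_le[of "- v" a "- b"] neg assms(1) by simp
    ultimately show ?thesis
      by (simp add: m_def power2_eq_square algebra_simps)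
  next
    case outside
    then have "trunc1 v a \<theta> = v"
      by (auto simp: trunc1_def)
    then show ?thesis
      using outside by (simp add: m_def)
  qed
qed

lemma Trunc1_prox_le:
  fixes v b :: "real ^ 'n" and a :: real and \<theta> :: ereal
  assumes "0 \<le> a"
  shows "(norm (Trunc1 v a \<theta> - b))\<^sup>2 + 2 * a * masked_norm1 (Trunc1 v a \<theta>) (Trunc1 v a \<theta>) \<theta>
     \<le> (norm (v - b))\<^sup>2 + 2 * a * masked_norm1 b (Trunc1 v a \<theta>) \<theta>"
proof -
  have norm_sq: "(norm x)\<^sup>2 = (\<Sum>j\<in>UNIV. (x $ j)\<^sup>2)" for x :: "real ^ 'n"
    by (simp only: power2_norm_eq_inner) (simp add: inner_vec_def power2_eq_square)
  have "(\<Sum>j\<in>UNIV. (trunc1 (v $ j) a \<theta> - b $ j)\<^sup>2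
          + 2 * a * (\<bar>trunc1 (v $ j) a \<theta>\<bar> * (if ereal \<bar>trunc1 (v $ j) a \<theta>\<bar> \<le> \<theta> then 1 else 0)))
     \<le> (\<Sum>j\<in>UNIV. (v $ j - b $ j)\<^sup>2
          + 2 * a * (\<bar>b $ j\<bar> * (if ereal \<bar>trunc1 (v $ j) a \<theta>\<bar> \<le> \<theta> then 1 else 0)))"
    by (intro sum_mono trunc1_prox_le assms)
  then show ?thesis
    by (simp add: norm_sq masked_norm1_def Trunc1_def sum.distrib sum_distrib_left)
qed

lemma subgradient_step_le:
  fixes f :: "real ^ 'n \<Rightarrow> real"
  assumes subg: "is_subgradient f w G"
    and growth: "(norm G)\<^sup>2 \<le> A * f w + B"
    and eta: "0 < \<eta>"
  shows "(norm (w - \<eta> *\<^sub>R G - u))\<^sup>2 + 2 * \<eta> * ((1 - 0.5 * A * \<eta>) * f w)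
     \<le> (norm (w - u))\<^sup>2 + 2 * \<eta> * f u + \<eta>\<^sup>2 * B"
proof -
  have expand: "(norm (w - \<eta> *\<^sub>R G - u))\<^sup>2
      = (norm (w - u))\<^sup>2 - 2 * \<eta> * (G \<bullet> (w - u)) + \<eta>\<^sup>2 * (norm G)\<^sup>2"
  proof -
    have "w - \<eta> *\<^sub>R G - u = (w - u) - \<eta> *\<^sub>R G"
      by simp
    then show ?thesis
      unfolding power2_norm_eq_inner
      by (simp add: inner_diff_left inner_diff_right inner_commute algebra_simps power2_eq_square)
  qed
  have "f u \<ge> f w - G \<bullet> (w - u)"
    using subg unfolding is_subgradient_def by (metis add_uminus_conv_diff inner_diff_right minus_diff_eq)
  then have "2 * \<eta> * f w - 2 * \<eta> * (G \<bullet> (w - u)) \<le> 2 * \<eta> * f u"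
    using mult_left_mono[of _ _ "2 * \<eta>"] eta by (simp add: right_diff_distrib[symmetric])
  moreover have "\<eta>\<^sup>2 * (norm G)\<^sup>2 \<le> \<eta>\<^sup>2 * (A * f w) + \<eta>\<^sup>2 * B"
    using mult_left_mono[OF growth, of "\<eta>\<^sup>2"] by (simp add: distrib_left)
  moreover have "2 * \<eta> * ((1 - 0.5 * A * \<eta>) * f w) = 2 * \<eta> * f w - \<eta>\<^sup>2 * (A * f w)"
    by (simp add: power2_eq_square algebra_simps)
  ultimately show ?thesis
    unfolding expand by linarith
qed

lemma telescoping_sum_le:
  fixes D a b :: "nat \<Rightarrow> real"
  assumes "m \<le> Suc n"
    and step: "\<And>i. m \<le> i \<Longrightarrow> i \<le> n \<Longrightarrow> D (Suc i) + a i \<le> D i + b i"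
    and "0 \<le> D (Suc n)"
  shows "(\<Sum>i=m..n. a i) \<le> D m + (\<Sum>i=m..n. b i)"
proof -
  have "(\<Sum>i=m..n. D (Suc i) - D i) + (\<Sum>i=m..n. a i) \<le> (\<Sum>i=m..n. b i)"
    unfolding sum.distrib[symmetric] by (rule sum_mono) (use step in force)
  moreover have "(\<Sum>i=m..n. D (Suc i) - D i) = D (Suc n) - D m"
    using assms(1) by (rule sum_Suc_diff)
  ultimately show ?thesis
    using assms(3) by linarith
qed

theorem theorem1:
  fixes L :: "real ^ 'n \<Rightarrow> real ^ 'm \<Rightarrow> real"
    and grad :: "real ^ 'n \<Rightarrow> real ^ 'm \<Rightarrow> real ^ 'n"
    and A B \<eta> :: real and \<theta> :: ereal
    and g :: "nat \<Rightarrow> real" and z :: "nat \<Rightarrow> real ^ 'm"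
    and w :: "nat \<Rightarrow> real ^ 'n"
    and T :: nat and wbar :: "real ^ 'n"
  assumes dim: "CARD('m) = CARD('n) + 1"
    and conv: "\<And>zz. convex_on UNIV (\<lambda>v. L v zz)"
    and subg: "\<And>v zz. is_subgradient (\<lambda>u. L u zz) v (grad v zz)"
    and A: "A \<ge> 0" and B: "B \<ge> 0"
    and growth: "\<And>v zz. (norm (grad v zz))\<^sup>2 \<le> A * L v zz + B"
    and eta: "\<eta> > 0" and eta_ne: "1 - 0.5 * A * \<eta> \<noteq> 0"
    and theta: "\<theta> \<ge> 0"
    and g_nonneg: "\<And>i. i \<ge> 1 \<Longrightarrow> g i \<ge> 0"
    and w1: "w 1 = 0"
    and wstep: "\<And>i. i \<ge> 1 \<Longrightarrow>
        w (Suc i) = Trunc1 (w i - \<eta> *\<^sub>R grad (w i) (z i)) (\<eta> * g i) \<theta>"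
    and T: "T \<ge> 1"
  shows "(1 - 0.5 * A * \<eta>) / real T *
           (\<Sum>i=1..T. L (w i) (z i)
              + g i / (1 - 0.5 * A * \<eta>) * masked_norm1 (w (Suc i)) (w (Suc i)) \<theta>)
         \<le> \<eta> / 2 * B + (norm wbar)\<^sup>2 / (2 * \<eta> * real T)
           + 1 / real T * (\<Sum>i=1..T. L wbar (z i) + g i * masked_norm1 wbar (w (Suc i)) \<theta>)"
proof -
  define c where "c = 1 - 0.5 * A * \<eta>"
  define mn where "mn i = masked_norm1 (w (Suc i)) (w (Suc i)) \<theta>" for i
  define mb where "mb i = masked_norm1 wbar (w (Suc i)) \<theta>" for i
  have step: "(norm (w (Suc i) - wbar))\<^sup>2 + 2 * \<eta> * (c * L (w i) (z i) + g i * mn i)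
      \<le> (norm (w i - wbar))\<^sup>2 + (2 * \<eta> * (L wbar (z i) + g i * mb i) + \<eta>\<^sup>2 * B)"
    if "1 \<le> i" for i
  proof -
    let ?v = "w i - \<eta> *\<^sub>R grad (w i) (z i)"
    have "0 \<le> \<eta> * g i"
      using eta g_nonneg[OF that] by simp
    from Trunc1_prox_le[OF this, of ?v \<theta> wbar]
    have "(norm (w (Suc i) - wbar))\<^sup>2 + 2 * (\<eta> * g i) * mn i
        \<le> (norm (?v - wbar))\<^sup>2 + 2 * (\<eta> * g i) * mb i"
      using wstep[OF that] unfolding mn_def mb_def by simp
    moreover have "(norm (?v - wbar))\<^sup>2 + 2 * \<eta> * (c * L (w i) (z i))
        \<le> (norm (w i - wbar))\<^sup>2 + 2 * \<eta> * L wbar (z i) + \<eta>\<^sup>2 * B"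
      unfolding c_def by (rule subgradient_step_le[OF subg growth eta])
    ultimately show ?thesis
      by (simp add: algebra_simps)
  qed
  have "(\<Sum>i=1..T. 2 * \<eta> * (c * L (w i) (z i) + g i * mn i))
      \<le> (norm (w 1 - wbar))\<^sup>2 + (\<Sum>i=1..T. 2 * \<eta> * (L wbar (z i) + g i * mb i) + \<eta>\<^sup>2 * B)"
    by (rule telescoping_sum_le[where D = "\<lambda>i. (norm (w i - wbar))\<^sup>2"]) (use T step in auto)
  then have "2 * \<eta> * (\<Sum>i=1..T. c * L (w i) (z i) + g i * mn i)
      \<le> (norm wbar)\<^sup>2 + 2 * \<eta> * (\<Sum>i=1..T. L wbar (z i) + g i * mb i) + real T * \<eta>\<^sup>2 * B"
    using w1 by (simp add: sum.distrib sum_distrib_left[symmetric])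
  moreover have "c * (\<Sum>i=1..T. L (w i) (z i) + g i / c * mn i) = (\<Sum>i=1..T. c * L (w i) (z i) + g i * mn i)"
    unfolding sum_distrib_left using eta_ne by (simp add: c_def distrib_left)
  ultimately show ?thesis
    using eta T unfolding c_def[symmetric] mn_def[symmetric] mb_def[symmetric]
    by (simp add: field_simps power2_eq_square)
qed

end
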